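(* For every integer $d\ge2$, the state on $\mathbb{C}^d\otimes\mathbb{C}^d$ $$\Upsilon=\frac{d}{2d-1}P_+ +\frac{1}{2d-1}\sum_{i=1}^{d-1}|i\,0\rangle\langle i\,0|$$ is symmetrically extendible, where $P_+=|\Psi_+\rangle\langle\Psi_+|$, $|\Psi_+\rangle=\frac1{\sqrt d}\sum_{i=0}^{d-1}|ii\rangle$.
   Context: A state $\rho_{AB}$ on $\mathcal{H}_A\otimes\mathcal{H}_B$ is called symmetrically extendible if there is a state $\rho_{ABB'}$ on $\mathcal{H}_A\otimes\mathcal{H}_B\otimes\mathcal{H}_{B'}$, with $\mathcal{H}_{B'}\cong\mathcal{H}_B$, such that $\rho_{ABB'}$ is invariant under the swap of $B$ and $B'$ and $\mathrm{Tr}_{B'}\rho_{ABB'}=\rho_{AB}$. $|i\,0\rangle=|i\rangle_A|0\rangle_B$. *)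

theory Defs
  imports Complex_Main
begin

text \<open>Finite-dimensional operators are represented by their matrix entries with respect to a
  fixed orthonormal (computational) basis indexed by a finite set I: an operator is a
  function rho :: 'i => 'i => complex, where rho x y is the entry for ket x and bra y.
  Entries outside I are irrelevant.  For C^dA (x) C^dB the basis |a b> is indexed by
  pairs (a,b) with a < dA, b < dB; for A B B' by triples (a,b,b').\<close>

definition hermitian_op :: "'i set \<Rightarrow> ('i \<Rightarrow> 'i \<Rightarrow> complex) \<Rightarrow> bool" where
  "hermitian_op I rho \<longleftrightarrow> (\<forall>x\<in>I. \<forall>y\<in>I. rho x y = cnj (rho y x))"

definition psd_op :: "'i set \<Rightarrow> ('i \<Rightarrow> 'i \<Rightarrow> complex) \<Rightarrow> bool" where
  "psd_op I rho \<longleftrightarrow> (\<forall>v :: 'i \<Rightarrow> complex.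
      (\<Sum>x\<in>I. \<Sum>y\<in>I. cnj (v x) * rho x y * v y) \<in> \<real> \<and>
      0 \<le> Re (\<Sum>x\<in>I. \<Sum>y\<in>I. cnj (v x) * rho x y * v y))"

definition trace_op :: "'i set \<Rightarrow> ('i \<Rightarrow> 'i \<Rightarrow> complex) \<Rightarrow> complex" where
  "trace_op I rho = (\<Sum>x\<in>I. rho x x)"

definition is_state :: "'i set \<Rightarrow> ('i \<Rightarrow> 'i \<Rightarrow> complex) \<Rightarrow> bool" where
  "is_state I rho \<longleftrightarrow> finite I \<and> hermitian_op I rho \<and> psd_op I rho \<and> trace_op I rho = 1"

definition bip_idx :: "nat \<Rightarrow> nat \<Rightarrow> (nat \<times> nat) set" where
  "bip_idx dA dB = {..<dA} \<times> {..<dB}"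

definition trip_idx :: "nat \<Rightarrow> nat \<Rightarrow> (nat \<times> nat \<times> nat) set" where
  "trip_idx dA dB = {..<dA} \<times> {..<dB} \<times> {..<dB}"

definition sym_extendible ::
  "nat \<Rightarrow> nat \<Rightarrow> ((nat \<times> nat) \<Rightarrow> (nat \<times> nat) \<Rightarrow> complex) \<Rightarrow> bool" where
  "sym_extendible dA dB rho \<longleftrightarrow> is_state (bip_idx dA dB) rho \<and>
     (\<exists>sigma :: (nat \<times> nat \<times> nat) \<Rightarrow> (nat \<times> nat \<times> nat) \<Rightarrow> complex.
        is_state (trip_idx dA dB) sigma \<and>
        (\<forall>a<dA. \<forall>b<dB. \<forall>b'<dB. \<forall>a2<dA. \<forall>c<dB. \<forall>c'<dB.
            sigma (a, b', b) (a2, c', c) = sigma (a, b, b') (a2, c, c')) \<and>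
        (\<forall>a<dA. \<forall>b<dB. \<forall>a2<dA. \<forall>c<dB.
            (\<Sum>k<dB. sigma (a, b, k) (a2, c, k)) = rho (a, b) (a2, c)))"

definition psi_plus :: "nat \<Rightarrow> nat \<times> nat \<Rightarrow> complex" where
  "psi_plus d = (\<lambda>(i, j). if i = j then complex_of_real (1 / sqrt (real d)) else 0)"

definition proj :: "('i \<Rightarrow> complex) \<Rightarrow> 'i \<Rightarrow> 'i \<Rightarrow> complex" where
  "proj psi = (\<lambda>x y. psi x * cnj (psi y))"

definition ket :: "'i \<Rightarrow> 'i \<Rightarrow> complex" where
  "ket z = (\<lambda>x. if x = z then 1 else 0)"

definition Upsilon :: "nat \<Rightarrow> (nat \<times> nat) \<Rightarrow> (nat \<times> nat) \<Rightarrow> complex" where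
  "Upsilon d = (\<lambda>x y.
      complex_of_real (real d / (2 * real d - 1)) * proj (psi_plus d) x y
      + complex_of_real (1 / (2 * real d - 1)) * (\<Sum>i\<in>{1..d-1}. proj (ket (i, 0)) x y))"

end

theory Submission
  imports Defs "HOL-Library.Complex_Order"
begin

(* The extension is the pure state sigma = |Phi><Phi| / (2d - 1) with
   Phi = sum_a |a a 0> + sum_(a >= 1) |a 0 a>, a 0/1-vector with 2d - 1 nonzero entries whose
   support is invariant under swapping B and B'. Tracing out B', the component B' = 0 leaves
   sum_(a,a') |a a><a' a'| = d P_+ and the component B' = a >= 1 leaves |a 0><a 0|, so
   Tr_B' sigma = Upsilon. In particular Upsilon is a state, being a partial trace of one. *)

definition quad_form :: "'i set \<Rightarrow> ('i \<Rightarrow> 'i \<Rightarrow> complex) \<Rightarrow> ('i \<Rightarrow> complex) \<Rightarrow> complex" where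
  "quad_form I rho v = (\<Sum>x\<in>I. \<Sum>y\<in>I. cnj (v x) * rho x y * v y)"

lemma psd_op_iff_quad_form_nonneg: "psd_op I rho \<longleftrightarrow> (\<forall>v. 0 \<le> quad_form I rho v)"
  unfolding psd_op_def quad_form_def less_eq_complex_def complex_is_Real_iff by auto

lemma quad_form_proj:
  "quad_form I (proj psi) v = complex_of_real ((cmod (\<Sum>y\<in>I. cnj (psi y) * v y))\<^sup>2)"
proof -
  have "quad_form I (proj psi) v = (\<Sum>x\<in>I. cnj (v x) * psi x) * (\<Sum>y\<in>I. cnj (psi y) * v y)"
    unfolding quad_form_def proj_def sum_product by (simp add: mult_ac)
  then show ?thesis
    unfolding complex_norm_square by (simp add: mult.commute)
qed

lemma psd_op_proj: "psd_op I (proj psi)"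
  by (simp add: psd_op_iff_quad_form_nonneg quad_form_proj less_eq_complex_def)

lemma psd_op_scale:
  assumes "0 \<le> c" and "psd_op I rho"
  shows "psd_op I (\<lambda>x y. c * rho x y)"
proof -
  have "quad_form I (\<lambda>x y. c * rho x y) v = c * quad_form I rho v" for v
    unfolding quad_form_def by (simp add: sum_distrib_left mult_ac)
  then show ?thesis
    using assms by (simp add: psd_op_iff_quad_form_nonneg)
qed

lemma is_state_normalized_proj:
  assumes "finite I" and norm: "(\<Sum>x\<in>I. (cmod (psi x))\<^sup>2) = n" and "n > 0"
  shows "is_state I (\<lambda>x y. complex_of_real (1 / n) * proj psi x y)"
proof -
  have "trace_op I (\<lambda>x y. complex_of_real (1 / n) * proj psi x y)
      = complex_of_real (1 / n) * complex_of_real (\<Sum>x\<in>I. (cmod (psi x))\<^sup>2)"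
    unfolding trace_op_def proj_def of_real_sum complex_norm_square sum_distrib_left ..
  also have "\<dots> = 1"
    using norm \<open>n > 0\<close> by (simp flip: of_real_mult)
  finally have "trace_op I (\<lambda>x y. complex_of_real (1 / n) * proj psi x y) = 1" .
  moreover have "hermitian_op I (\<lambda>x y. complex_of_real (1 / n) * proj psi x y)"
    unfolding hermitian_op_def proj_def by simp
  moreover have "psd_op I (\<lambda>x y. complex_of_real (1 / n) * proj psi x y)"
    using \<open>n > 0\<close> by (intro psd_op_scale psd_op_proj) (simp add: less_eq_complex_def)
  ultimately show ?thesis
    using \<open>finite I\<close> unfolding is_state_def by blast
qed

lemma quad_form_sum: "quad_form I (\<lambda>x y. \<Sum>k\<in>K. rho k x y) v = (\<Sum>k\<in>K. quad_form I (rho k) v)"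
  unfolding quad_form_def by (simp add: sum_distrib_left sum_distrib_right sum.swap[where B = K])

lemma psd_op_sum: "(\<And>k. k \<in> K \<Longrightarrow> psd_op I (rho k)) \<Longrightarrow> psd_op I (\<lambda>x y. \<Sum>k\<in>K. rho k x y)"
  by (simp add: psd_op_iff_quad_form_nonneg quad_form_sum sum_nonneg)

lemma quad_form_mono_neutral:
  assumes "finite I" "J \<subseteq> I" and "\<And>x. x \<in> I - J \<Longrightarrow> v x = 0"
  shows "quad_form J rho v = quad_form I rho v"
proof -
  have inner: "(\<Sum>y\<in>J. cnj (v x) * rho x y * v y) = (\<Sum>y\<in>I. cnj (v x) * rho x y * v y)" for x
    by (rule sum.mono_neutral_left) (use assms in auto)
  have "(\<Sum>x\<in>J. \<Sum>y\<in>I. cnj (v x) * rho x y * v y) = (\<Sum>x\<in>I. \<Sum>y\<in>I. cnj (v x) * rho x y * v y)"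
    by (rule sum.mono_neutral_left) (use assms in auto)
  then show ?thesis
    unfolding quad_form_def inner .
qed

lemma psd_op_compress:
  assumes "inj_on h J" "h ` J \<subseteq> I" "finite I" and "psd_op I rho"
  shows "psd_op J (\<lambda>x y. rho (h x) (h y))"
proof -
  have "0 \<le> quad_form J (\<lambda>x y. rho (h x) (h y)) v" for v
  proof -
    define w where "w z = (if z \<in> h ` J then v (inv_into J h z) else 0)" for z
    have "quad_form J (\<lambda>x y. rho (h x) (h y)) v = quad_form (h ` J) rho w"
      unfolding quad_form_def w_def using assms(1) by (simp add: sum.reindex)
    also have "\<dots> = quad_form I rho w"
      by (rule quad_form_mono_neutral) (use assms in \<open>auto simp: w_def\<close>)
    finally show ?thesis
      using assms(4) by (simp add: psd_op_iff_quad_form_nonneg)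
  qed
  then show ?thesis
    by (simp add: psd_op_iff_quad_form_nonneg)
qed

definition partial_trace_right ::
  "'c set \<Rightarrow> ('a \<times> 'b \<times> 'c \<Rightarrow> 'a \<times> 'b \<times> 'c \<Rightarrow> complex) \<Rightarrow> 'a \<times> 'b \<Rightarrow> 'a \<times> 'b \<Rightarrow> complex" where
  "partial_trace_right K sigma = (\<lambda>x y. \<Sum>k\<in>K. sigma (fst x, snd x, k) (fst y, snd y, k))"

lemma partial_trace_right_apply [simp]:
  "partial_trace_right K sigma (a, b) (a', b') = (\<Sum>k\<in>K. sigma (a, b, k) (a', b', k))"
  unfolding partial_trace_right_def by simp

lemma hermitian_op_partial_trace_right:
  assumes "hermitian_op (A \<times> B \<times> K) sigma"
  shows "hermitian_op (A \<times> B) (partial_trace_right K sigma)"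
  unfolding hermitian_op_def
proof clarify
  fix a b a' b'
  assume "a \<in> A" "b \<in> B" "a' \<in> A" "b' \<in> B"
  then have "sigma (a, b, k) (a', b', k) = cnj (sigma (a', b', k) (a, b, k))" if "k \<in> K" for k
    using assms that unfolding hermitian_op_def by blast
  then show "partial_trace_right K sigma (a, b) (a', b') = cnj (partial_trace_right K sigma (a', b') (a, b))"
    by (simp add: cnj_sum)
qed

lemma trace_op_partial_trace_right:
  assumes "finite A" "finite B" "finite K"
  shows "trace_op (A \<times> B) (partial_trace_right K sigma) = trace_op (A \<times> B \<times> K) sigma"
  using assms unfolding trace_op_def by (simp add: sum.cartesian_product')

lemma psd_op_partial_trace_right:
  assumes "finite A" "finite B" "finite K" and "psd_op (A \<times> B \<times> K) sigma"
  shows "psd_op (A \<times> B) (partial_trace_right K sigma)"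
proof -
  have "psd_op (A \<times> B) (\<lambda>x y. sigma (fst x, snd x, k) (fst y, snd y, k))" if "k \<in> K" for k
    by (rule psd_op_compress[of "\<lambda>x. (fst x, snd x, k)" _ "A \<times> B \<times> K"])
      (use assms that in \<open>auto simp: inj_on_def\<close>)
  then show ?thesis
    unfolding partial_trace_right_def by (rule psd_op_sum)
qed

lemma is_state_partial_trace_right:
  assumes "finite A" "finite B" "finite K" and "is_state (A \<times> B \<times> K) sigma"
  shows "is_state (A \<times> B) (partial_trace_right K sigma)"
  using assms unfolding is_state_def
  by (simp add: hermitian_op_partial_trace_right psd_op_partial_trace_right trace_op_partial_trace_right)

definition extension_vector :: "nat \<times> nat \<times> nat \<Rightarrow> complex" where
  "extension_vector = (\<lambda>(a, b, b'). of_bool (b = a \<and> b' = 0 \<or> b = 0 \<and> b' = a))"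

definition Upsilon_extension :: "nat \<Rightarrow> (nat \<times> nat \<times> nat) \<Rightarrow> (nat \<times> nat \<times> nat) \<Rightarrow> complex" where
  "Upsilon_extension d = (\<lambda>x y. complex_of_real (1 / (2 * real d - 1)) * proj extension_vector x y)"

lemma extension_vector_swap: "extension_vector (a, b', b) = extension_vector (a, b, b')"
  unfolding extension_vector_def by auto

lemma cnj_extension_vector [simp]: "cnj (extension_vector x) = extension_vector x"
  unfolding extension_vector_def by (simp split: prod.split)

lemma norm_sq_extension_vector:
  assumes "d > 0"
  shows "(\<Sum>x\<in>trip_idx d d. (cmod (extension_vector x))\<^sup>2) = 2 * real d - 1"
proof -
  define diag where "diag = (\<lambda>a. (a, a, 0 :: nat)) ` {..<d}"
  define anti where "anti = (\<lambda>a. (a, 0 :: nat, a)) ` {..<d}"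
  have "(cmod (extension_vector x))\<^sup>2 = of_bool (x \<in> diag \<union> anti)" if "x \<in> trip_idx d d" for x
    using that by (cases x) (auto simp: extension_vector_def diag_def anti_def trip_idx_def)
  then have "(\<Sum>x\<in>trip_idx d d. (cmod (extension_vector x))\<^sup>2) = (\<Sum>x\<in>trip_idx d d. of_bool (x \<in> diag \<union> anti))"
    by (rule sum.cong[OF refl])
  also have "\<dots> = real (card (trip_idx d d \<inter> {x. x \<in> diag \<union> anti}))"
    by (rule sum_of_bool_eq) (simp_all add: trip_idx_def)
  also have "trip_idx d d \<inter> {x. x \<in> diag \<union> anti} = diag \<union> anti"
    unfolding trip_idx_def diag_def anti_def by auto
  finally have "(\<Sum>x\<in>trip_idx d d. (cmod (extension_vector x))\<^sup>2) = real (card (diag \<union> anti))" .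
  moreover have "card diag = d" "card anti = d"
    unfolding diag_def anti_def by (simp_all add: card_image inj_on_def)
  moreover have "diag \<inter> anti = {(0, 0, 0)}"
    using assms unfolding diag_def anti_def by auto
  moreover have "card diag + card anti = card (diag \<union> anti) + card (diag \<inter> anti)"
    unfolding diag_def anti_def by (rule card_Un_Int) simp_all
  ultimately show ?thesis
    by simp
qed

lemma extension_vector_partial_inner:
  assumes "d > 0"
  shows "(\<Sum>k<d. extension_vector (a, b, k) * extension_vector (a', b', k))
    = of_bool (a = b \<and> a' = b') + of_bool (a = a' \<and> b = 0 \<and> b' = 0 \<and> a \<in> {1..<d})"
proof -
  have "{..<d} = insert 0 {1..<d}"
    using assms by auto
  then have "(\<Sum>k<d. extension_vector (a, b, k) * extension_vector (a', b', k))
    = extension_vector (a, b, 0) * extension_vector (a', b', 0) + (\<Sum>k\<in>{1..<d}. extension_vector (a, b, k) * extension_vector (a', b', k))"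
    by simp
  also have "(\<Sum>k\<in>{1..<d}. extension_vector (a, b, k) * extension_vector (a', b', k))
    = (\<Sum>k\<in>{1..<d}. if k = a then of_bool (b = 0 \<and> b' = 0 \<and> a' = a) else 0)"
    by (rule sum.cong) (auto simp: extension_vector_def)
  finally show ?thesis
    by (auto simp: extension_vector_def)
qed

lemma Upsilon_apply:
  assumes "d > 0"
  shows "Upsilon d (a, b) (a', b')
    = (of_bool (a = b \<and> a' = b') + of_bool (a = a' \<and> b = 0 \<and> b' = 0 \<and> a \<in> {1..<d}))
      / complex_of_real (2 * real d - 1)"
proof -
  have "proj (psi_plus d) (a, b) (a', b') = of_bool (a = b \<and> a' = b') / of_nat d"
    using assms unfolding proj_def psi_plus_def
    by (simp flip: of_real_mult add: real_sqrt_mult_self)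
  moreover have "(\<Sum>i\<in>{1..d-1}. proj (ket (i, 0)) (a, b) (a', b'))
      = (\<Sum>i\<in>{1..d-1}. if i = a then of_bool (a = a' \<and> b = 0 \<and> b' = 0) else 0)"
    unfolding proj_def ket_def by (rule sum.cong) auto
  moreover have "\<dots> = of_bool (a = a' \<and> b = 0 \<and> b' = 0 \<and> a \<in> {1..<d})"
    using assms by auto
  ultimately show ?thesis
    using assms unfolding Upsilon_def by (simp add: field_simps)
qed

lemma Upsilon_eq_partial_trace_right:
  assumes "d > 0"
  shows "Upsilon d = partial_trace_right {..<d} (Upsilon_extension d)"
proof (intro ext, clarify)
  fix a b a' b'
  have "partial_trace_right {..<d} (Upsilon_extension d) (a, b) (a', b')
    = complex_of_real (1 / (2 * real d - 1)) * (\<Sum>k<d. extension_vector (a, b, k) * extension_vector (a', b', k))"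
    unfolding Upsilon_extension_def proj_def by (simp add: sum_distrib_left)
  also have "\<dots> = Upsilon d (a, b) (a', b')"
    unfolding extension_vector_partial_inner[OF assms] Upsilon_apply[OF assms]
    by (simp only: of_real_inverse divide_inverse mult_1_left mult.commute)
  finally show "Upsilon d (a, b) (a', b') = partial_trace_right {..<d} (Upsilon_extension d) (a, b) (a', b')"
    by (rule sym)
qed

lemma is_state_Upsilon_extension:
  assumes "d > 0"
  shows "is_state (trip_idx d d) (Upsilon_extension d)"
  unfolding Upsilon_extension_def
  by (rule is_state_normalized_proj[OF _ norm_sq_extension_vector[OF assms]]) (use assms in \<open>auto simp: trip_idx_def\<close>)

theorem mainTheorem4:
  fixes d :: nat
  assumes "d \<ge> 2"
  shows "is_state (bip_idx d d) (Upsilon d) \<and> sym_extendible d d (Upsilon d)"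
proof -
  have "d > 0"
    using assms by simp
  have ext_state: "is_state (trip_idx d d) (Upsilon_extension d)"
    using \<open>d > 0\<close> by (rule is_state_Upsilon_extension)
  have ptrace: "Upsilon d = partial_trace_right {..<d} (Upsilon_extension d)"
    using \<open>d > 0\<close> by (rule Upsilon_eq_partial_trace_right)
  have state: "is_state (bip_idx d d) (Upsilon d)"
    using is_state_partial_trace_right[of "{..<d}" "{..<d}" "{..<d}"] ext_state
    unfolding ptrace bip_idx_def trip_idx_def by simp
  have swap: "Upsilon_extension d (a, b', b) (a2, c', c) = Upsilon_extension d (a, b, b') (a2, c, c')"
    for a b b' a2 c c'
    unfolding Upsilon_extension_def proj_def by (simp add: extension_vector_swap)
  show ?thesis
    unfolding sym_extendible_def using state ext_state swap
    by (auto simp: ptrace)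
qed

end
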